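(* Let $(\lambda,\mu,\mu')$ be an admissible triplet of type 1, and let $\mu^\diamond,\mu'^\diamond$ be the associated weights. Then $\lambda+\mu'^\diamond\in P_+$; equivalently, the triplet $(\lambda,\mu'^\diamond,\mu^\diamond)$ is admissible.
   Context: Type $D_n$ weights are $(\lambda_1,\dots,\lambda_n)$; $\langle\lambda,\alpha_j^\vee\rangle=\lambda_j-\lambda_{j+1}$ ($j<n$), $\langle\lambda,\alpha_n^\vee\rangle=\lambda_{n-1}+\lambda_n$; $P_+=\{\lambda_j\in\frac12\mathbb Z,\lambda_j-\lambda_k\in\mathbb Z,\lambda_1\ge\dots\ge\lambda_n,\lambda_{n-1}+\lambda_n\ge0\}$; $P[S]=\{(\pm\frac12,\dots,\pm\frac12)\}$. $\Delta^k$ is the set of sums $\mu_1+\dots+\mu_k$ over $(\mu_1,\dots,\mu_k)\in P[S]^k$ with all partial sums in $P_+$ ($\Delta^0=\{0\}$). A triplet $(\lambda,\mu,\mu')$ is admissible if $\lambda\in\Delta^k$ for some $k\ge0$, $\mu,\mu'\in P[S]$, $\lambda+\mu,\lambda+\mu+\mu'\in P_+$. A free interval is a subset $\mathrm{Fr}\subset\{1,\dots,n\}$, maximal by inclusion, with $\lambda$ constant on $\mathrm{Fr}$ and $\mu_j\mu'_j<0$ for $j\in\mathrm{Fr}$. Weights $\mu^*,\mu'^*$: equal to $\mu,\mu'$ outside free intervals; on each free interval, with $b=|\{j\in\mathrm{Fr}:\mu'_j=+\frac12\}|$, $\mu'^*_j=+\frac12$ on the $b$ smallest elements of $\mathrm{Fr}$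 and $-\frac12$ on the rest, $\mu^*_j=-\mu'^*_j$. The triplet is of type 1 if $\lambda_{n-1}+\lambda_n+\mu'^*_{n-1}+\mu'^*_n<0$ and $n-1$, $n$ lie in two different free intervals. In that case let $a$ be the number of elements $j$ of the free interval containing $n-1$ with $\mu'_j=-\frac12$; then $\mu'^\diamond$ is obtained from $\mu'^*$ by setting the coordinates $n$ and $n-a$ equal to $+\frac12$, and $\mu^\diamond$ from $\mu^*$ by setting the coordinates $n$ and $n-a$ equal to $-\frac12$ (in $\mu'^*$ these coordinates are $-\frac12$ and in $\mu^*$ they are $+\frac12$, so $\mu^\diamond+\mu'^\diamond=\mu+\mu'$). *)

theory Defs
  imports Main "HOL-Library.Function_Algebras" Complex_Main
begin

text \<open>Weights of type D_n are functions nat => real, with coordinates indexed by 1..n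
  and value 0 outside {1..n}.\<close>

definition is_weight :: "nat \<Rightarrow> (nat \<Rightarrow> real) \<Rightarrow> bool" where
  "is_weight n l \<longleftrightarrow> (\<forall>j. j \<notin> {1..n} \<longrightarrow> l j = 0)"

definition Pplus :: "nat \<Rightarrow> (nat \<Rightarrow> real) set" where
  "Pplus n = {l. is_weight n l
      \<and> (\<forall>j\<in>{1..n}. 2 * l j \<in> \<int>)
      \<and> (\<forall>j\<in>{1..n}. \<forall>k\<in>{1..n}. l j - l k \<in> \<int>)
      \<and> (\<forall>j. 1 \<le> j \<and> j < n \<longrightarrow> l (j + 1) \<le> l j)
      \<and> l (n - 1) + l n \<ge> 0}"

definition PS :: "nat \<Rightarrow> (nat \<Rightarrow> real) set" where
  "PS n = {m. is_weight n m \<and> (\<forall>j\<in>{1..n}. m j = 1/2 \<or> m j = -1/2)}"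

definition Delta :: "nat \<Rightarrow> nat \<Rightarrow> (nat \<Rightarrow> real) set" where
  "Delta n k = {l. \<exists>ms :: (nat \<Rightarrow> real) list. length ms = k
      \<and> (\<forall>m\<in>set ms. m \<in> PS n)
      \<and> (\<forall>i\<in>{1..k}. (\<Sum>t<i. ms ! t) \<in> Pplus n)
      \<and> l = (\<Sum>t<k. ms ! t)}"

definition admissible :: "nat \<Rightarrow> (nat \<Rightarrow> real) \<Rightarrow> (nat \<Rightarrow> real) \<Rightarrow> (nat \<Rightarrow> real) \<Rightarrow> bool" where
  "admissible n l m m' \<longleftrightarrow> (\<exists>k. l \<in> Delta n k) \<and> m \<in> PS n \<and> m' \<in> PS n
      \<and> l + m \<in> Pplus n \<and> l + m + m' \<in> Pplus n"

definition free_cand :: "nat \<Rightarrow> (nat \<Rightarrow> real) \<Rightarrow> (nat \<Rightarrow> real) \<Rightarrow> (nat \<Rightarrow> real) \<Rightarrow> nat set \<Rightarrow> bool" where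
  "free_cand n l m m' Fr \<longleftrightarrow> Fr \<subseteq> {1..n} \<and> (\<forall>i\<in>Fr. \<forall>j\<in>Fr. l i = l j)
      \<and> (\<forall>j\<in>Fr. m j * m' j < 0)"

definition free_interval :: "nat \<Rightarrow> (nat \<Rightarrow> real) \<Rightarrow> (nat \<Rightarrow> real) \<Rightarrow> (nat \<Rightarrow> real) \<Rightarrow> nat set \<Rightarrow> bool" where
  "free_interval n l m m' Fr \<longleftrightarrow> free_cand n l m m' Fr
      \<and> (\<forall>G. free_cand n l m m' G \<and> Fr \<subseteq> G \<longrightarrow> G = Fr)"

text \<open>The free interval containing j (meaningful when such exists; free intervals are disjoint).\<close>
definition fr_of :: "nat \<Rightarrow> (nat \<Rightarrow> real) \<Rightarrow> (nat \<Rightarrow> real) \<Rightarrow> (nat \<Rightarrow> real) \<Rightarrow> nat \<Rightarrow> nat set" where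
  "fr_of n l m m' j = (SOME Fr. free_interval n l m m' Fr \<and> j \<in> Fr)"

definition mu'_star :: "nat \<Rightarrow> (nat \<Rightarrow> real) \<Rightarrow> (nat \<Rightarrow> real) \<Rightarrow> (nat \<Rightarrow> real) \<Rightarrow> nat \<Rightarrow> real" where
  "mu'_star n l m m' j =
     (if \<exists>Fr. free_interval n l m m' Fr \<and> j \<in> Fr then
        (let Fr = fr_of n l m m' j; b = card {i\<in>Fr. m' i = 1/2}
         in if card {i\<in>Fr. i < j} < b then 1/2 else -1/2)
      else m' j)"

definition mu_star :: "nat \<Rightarrow> (nat \<Rightarrow> real) \<Rightarrow> (nat \<Rightarrow> real) \<Rightarrow> (nat \<Rightarrow> real) \<Rightarrow> nat \<Rightarrow> real" where
  "mu_star n l m m' j =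
     (if \<exists>Fr. free_interval n l m m' Fr \<and> j \<in> Fr then - mu'_star n l m m' j else m j)"

definition type1 :: "nat \<Rightarrow> (nat \<Rightarrow> real) \<Rightarrow> (nat \<Rightarrow> real) \<Rightarrow> (nat \<Rightarrow> real) \<Rightarrow> bool" where
  "type1 n l m m' \<longleftrightarrow>
     l (n - 1) + l n + mu'_star n l m m' (n - 1) + mu'_star n l m m' n < 0
     \<and> (\<exists>F G. free_interval n l m m' F \<and> free_interval n l m m' G \<and> F \<noteq> G
              \<and> n - 1 \<in> F \<and> n \<in> G)"

definition a_num :: "nat \<Rightarrow> (nat \<Rightarrow> real) \<Rightarrow> (nat \<Rightarrow> real) \<Rightarrow> (nat \<Rightarrow> real) \<Rightarrow> nat" where
  "a_num n l m m' = card {j \<in> fr_of n l m m' (n - 1). m' j = -1/2}"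

definition mu'_diamond :: "nat \<Rightarrow> (nat \<Rightarrow> real) \<Rightarrow> (nat \<Rightarrow> real) \<Rightarrow> (nat \<Rightarrow> real) \<Rightarrow> nat \<Rightarrow> real" where
  "mu'_diamond n l m m' = (mu'_star n l m m')(n := 1/2, n - a_num n l m m' := 1/2)"

definition mu_diamond :: "nat \<Rightarrow> (nat \<Rightarrow> real) \<Rightarrow> (nat \<Rightarrow> real) \<Rightarrow> (nat \<Rightarrow> real) \<Rightarrow> nat \<Rightarrow> real" where
  "mu_diamond n l m m' = (mu_star n l m m')(n := -1/2, n - a_num n l m m' := -1/2)"

end

theory Submission
  imports Defs
begin

(* Type 1 forces l (n-1) > l n, since n-1 and n lie in different free intervals; then
   integrality of l (n-1) + l n and the type-1 inequality force l (n-1) + l n = 0 and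
   mu'* (n-1) = -1/2. The free interval of n-1 is a segment {p..n-1} on which mu'* is +1/2
   exactly at its first b positions, so mu'* (n-1) = -1/2 gives a >= 1, and n - a = p + b is
   the first position of the segment where mu'* is -1/2. Raising it to +1/2 keeps mu'*
   nonincreasing along the segment, and raising coordinate n restores the condition on the
   last two coordinates. Everywhere else dominance of l + mu'^diamond holds because mu'* is
   nonincreasing on every level set of l, while between different levels l drops by an
   integer, hence by at least 1. *)

definition free_block :: "nat \<Rightarrow> (nat \<Rightarrow> real) \<Rightarrow> (nat \<Rightarrow> real) \<Rightarrow> (nat \<Rightarrow> real) \<Rightarrow> nat \<Rightarrow> nat set"
  where "free_block n l m m' j = {i\<in>{1..n}. l i = l j \<and> m i * m' i < 0}"

lemma free_block_eq_of_mem: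
  "i \<in> free_block n l m m' j \<Longrightarrow> free_block n l m m' i = free_block n l m m' j"
  unfolding free_block_def by auto

lemma free_interval_eq_free_block:
  assumes "free_interval n l m m' Fr" and "j \<in> Fr"
  shows "Fr = free_block n l m m' j"
proof -
  have cand: "free_cand n l m m' Fr"
    using assms(1) unfolding free_interval_def by blast
  then have "Fr \<subseteq> free_block n l m m' j"
    using assms(2) unfolding free_cand_def free_block_def by blast
  moreover have "free_cand n l m m' (free_block n l m m' j)"
    unfolding free_cand_def free_block_def by auto
  ultimately show ?thesis
    using assms(1) unfolding free_interval_def by blast
qed

lemma free_interval_free_block:
  assumes "j \<in> {1..n}" and "m j * m' j < 0"
  shows "free_interval n l m m' (free_block n l m m' j)"
proof -
  have "G = free_block n l m m' j"
    if "free_cand n l m m' G" and "free_block n l m m' j \<subseteq> G" for G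
  proof -
    have "j \<in> G"
      using that(2) assms unfolding free_block_def by auto
    with that have "G \<subseteq> free_block n l m m' j"
      unfolding free_cand_def free_block_def by blast
    with that(2) show ?thesis by blast
  qed
  moreover have "free_cand n l m m' (free_block n l m m' j)"
    unfolding free_cand_def free_block_def by auto
  ultimately show ?thesis
    unfolding free_interval_def by blast
qed

lemma in_free_interval_iff:
  "(\<exists>Fr. free_interval n l m m' Fr \<and> j \<in> Fr) \<longleftrightarrow> j \<in> {1..n} \<and> m j * m' j < 0"
proof
  assume "\<exists>Fr. free_interval n l m m' Fr \<and> j \<in> Fr"
  then show "j \<in> {1..n} \<and> m j * m' j < 0"
    unfolding free_interval_def free_cand_def by blast
next
  assume "j \<in> {1..n} \<and> m j * m' j < 0"
  then show "\<exists>Fr. free_interval n l m m' Fr \<and> j \<in> Fr"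
    using free_interval_free_block by (fastforce simp: free_block_def)
qed

lemma fr_of_eq_free_block:
  assumes "j \<in> {1..n}" and "m j * m' j < 0"
  shows "fr_of n l m m' j = free_block n l m m' j"
  unfolding fr_of_def
proof (rule someI2)
  show "free_interval n l m m' (free_block n l m m' j) \<and> j \<in> free_block n l m m' j"
    using free_interval_free_block[of j n m m' l, OF assms] assms by (simp add: free_block_def)
qed (use free_interval_eq_free_block in blast)

lemma mu'_star_eq:
  "mu'_star n l m m' j =
    (if j \<in> {1..n} \<and> m j * m' j < 0 then
       (if card {i\<in>free_block n l m m' j. i < j} < card {i\<in>free_block n l m m' j. m' i = 1/2}
        then 1/2 else -1/2)
     else m' j)"
  unfolding mu'_star_def in_free_interval_iff by (auto simp: fr_of_eq_free_block Let_def)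

lemma mu'_star_free:
  assumes "j \<in> {1..n}" and "m j * m' j < 0"
  shows "mu'_star n l m m' j =
    (if card {i\<in>free_block n l m m' j. i < j} < card {i\<in>free_block n l m m' j. m' i = 1/2}
     then 1/2 else -1/2)"
  using assms by (simp add: mu'_star_eq)

lemma mu'_star_not_free: "\<not> m j * m' j < 0 \<Longrightarrow> mu'_star n l m m' j = m' j"
  by (simp add: mu'_star_eq)

lemma mu_star_eq:
  "mu_star n l m m' j = (if j \<in> {1..n} \<and> m j * m' j < 0 then - mu'_star n l m m' j else m j)"
  unfolding mu_star_def in_free_interval_iff ..

lemma PS_D: "x \<in> PS n \<Longrightarrow> j \<in> {1..n} \<Longrightarrow> x j = 1/2 \<or> x j = -1/2"
  unfolding PS_def by auto

lemma PS_outside: "x \<in> PS n \<Longrightarrow> j \<notin> {1..n} \<Longrightarrow> x j = 0"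
  unfolding PS_def is_weight_def by auto

lemma PS_I:
  "(\<And>j. j \<in> {1..n} \<Longrightarrow> x j = 1/2 \<or> x j = -1/2) \<Longrightarrow> (\<And>j. j \<notin> {1..n} \<Longrightarrow> x j = 0)
    \<Longrightarrow> x \<in> PS n"
  unfolding PS_def is_weight_def by auto

lemma PS_update:
  assumes "x \<in> PS n" and "i \<in> {1..n}" and "c = 1/2 \<or> c = -1/2"
  shows "x(i := c) \<in> PS n"
  using assms by (intro PS_I) (auto dest: PS_D PS_outside)

lemma PS_mult_neg_iff_add_eq_0:
  assumes "m \<in> PS n" and "m' \<in> PS n" and "j \<in> {1..n}"
  shows "m j * m' j < 0 \<longleftrightarrow> m j + m' j = 0"
  using PS_D[OF assms(1,3)] PS_D[OF assms(2,3)] by (elim disjE) (simp_all (no_asm_simp))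

lemma PS_eq_if_not_mult_neg:
  assumes "m \<in> PS n" and "m' \<in> PS n" and "j \<in> {1..n}" and "\<not> m j * m' j < 0"
  shows "m j = m' j"
  using PS_mult_neg_iff_add_eq_0[OF assms(1-3)] PS_D[OF assms(1,3)] PS_D[OF assms(2,3)] assms(4)
  by auto

lemma mu'_star_PS:
  assumes "m' \<in> PS n"
  shows "mu'_star n l m m' \<in> PS n"
  using assms by (intro PS_I) (auto simp: mu'_star_eq dest: PS_D PS_outside)

lemma mu_star_PS:
  assumes "m \<in> PS n" and "m' \<in> PS n"
  shows "mu_star n l m m' \<in> PS n"
proof (rule PS_I)
  fix j assume "j \<in> {1..n}"
  then show "mu_star n l m m' j = 1/2 \<or> mu_star n l m m' j = -1/2"
    using PS_D[OF mu'_star_PS[OF assms(2)], of j l m] PS_D[OF assms(1), of j]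
    unfolding mu_star_eq by (cases "m j * m' j < 0") auto
qed (use assms in \<open>auto simp: mu_star_eq dest: PS_outside\<close>)

lemma mu_star_add_mu'_star:
  assumes "m \<in> PS n" and "m' \<in> PS n"
  shows "mu_star n l m m' j + mu'_star n l m m' j = m j + m' j"
  using PS_mult_neg_iff_add_eq_0[OF assms, of j] by (auto simp: mu_star_eq mu'_star_eq)

lemma zero_in_Pplus: "0 \<in> Pplus n"
  unfolding Pplus_def is_weight_def by simp

lemma Delta_subset_Pplus: "Delta n k \<subseteq> Pplus n"
proof
  fix l assume "l \<in> Delta n k"
  then obtain ms where sums: "\<forall>i\<in>{1..k}. (\<Sum>t<i. ms ! t) \<in> Pplus n" and l: "l = (\<Sum>t<k. ms ! t)"
    unfolding Delta_def by blast
  show "l \<in> Pplus n"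
  proof (cases "k = 0")
    case True
    then show ?thesis using l zero_in_Pplus by simp
  next
    case False
    then show ?thesis using sums l by auto
  qed
qed

lemma Pplus_antimono:
  assumes "l \<in> Pplus n" and "1 \<le> i" and "i \<le> j" and "j \<le> n"
  shows "l j \<le> l i"
  using assms(3,4)
proof (induction j rule: dec_induct)
  case (step j)
  then have "l (j + 1) \<le> l j"
    using assms(1,2) unfolding Pplus_def by auto
  with step show ?case by simp
qed simp

lemma Pplus_add_PS:
  assumes l: "l \<in> Pplus n" and x: "x \<in> PS n"
    and antimono: "\<And>j. 1 \<le> j \<Longrightarrow> j < n \<Longrightarrow> l (j + 1) = l j \<Longrightarrow> x (j + 1) \<le> x j"
    and last: "0 \<le> l (n - 1) + l n + x (n - 1) + x n"
  shows "l + x \<in> Pplus n"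
proof -
  have half: "x j = 1/2 \<or> x j = -1/2" if "j \<in> {1..n}" for j
    using PS_D[OF x that] .
  have ints: "2 * l j \<in> \<int>" "l j - l k \<in> \<int>" if "j \<in> {1..n}" "k \<in> {1..n}" for j k
    using l that unfolding Pplus_def by auto
  have "is_weight n (l + x)"
    using l x unfolding Pplus_def PS_def is_weight_def by simp
  moreover have "2 * (l + x) j \<in> \<int>" if "j \<in> {1..n}" for j
  proof -
    have "2 * x j = 1 \<or> 2 * x j = -1"
      using half[OF that] by auto
    then have "2 * x j \<in> \<int>"
      by (metis Ints_1 Ints_minus)
    then show ?thesis
      using ints(1)[OF that that] by (simp add: distrib_left)
  qed
  moreover have "(l + x) j - (l + x) k \<in> \<int>" if "j \<in> {1..n}" "k \<in> {1..n}" for j k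
  proof -
    have "x j - x k \<in> {-1, 0, 1}"
      using half[OF that(1)] half[OF that(2)] by auto
    then have "x j - x k \<in> \<int>"
      by auto
    moreover have "(l + x) j - (l + x) k = (l j - l k) + (x j - x k)"
      by simp
    ultimately show ?thesis
      using ints(2)[OF that] by (metis Ints_add)
  qed
  moreover have "(l + x) (j + 1) \<le> (l + x) j" if "1 \<le> j" "j < n" for j
  proof (cases "l (j + 1) = l j")
    case True
    then show ?thesis using antimono that by simp
  next
    case False
    have "l (j + 1) \<le> l j"
      using l that unfolding Pplus_def by auto
    moreover have "l j - l (j + 1) \<in> \<int>"
      using ints(2) that by simp
    ultimately have "1 \<le> l j - l (j + 1)"
      using False Ints_nonzero_abs_less1 by fastforce
    then show ?thesis
      using half[of j] half[of "j + 1"] that by auto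
  qed
  moreover have "0 \<le> (l + x) (n - 1) + (l + x) n"
    using last by simp
  ultimately show ?thesis
    unfolding Pplus_def by auto
qed

lemma free_block_convex:
  assumes l: "l \<in> Pplus n" and lmm: "l + m + m' \<in> Pplus n"
    and m: "m \<in> PS n" and m': "m' \<in> PS n"
    and i: "i \<in> free_block n l m m' j" and k: "k \<in> free_block n l m m' j"
    and "i \<le> h" and "h \<le> k"
  shows "h \<in> free_block n l m m' j"
proof -
  have i': "i \<in> {1..n}" "l i = l j" "m i + m' i = 0"
    and k': "k \<in> {1..n}" "l k = l j" "m k + m' k = 0"
    using i k PS_mult_neg_iff_add_eq_0[OF m m'] unfolding free_block_def by auto
  have h: "h \<in> {1..n}"
    using i' k' \<open>i \<le> h\<close> \<open>h \<le> k\<close> by auto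
  have "l h = l j"
    using Pplus_antimono[OF l, of i h] Pplus_antimono[OF l, of h k] i' k' h \<open>i \<le> h\<close> \<open>h \<le> k\<close>
    by auto
  moreover have "m h + m' h = 0"
    using Pplus_antimono[OF lmm, of i h] Pplus_antimono[OF lmm, of h k] i' k' h
      \<open>i \<le> h\<close> \<open>h \<le> k\<close> \<open>l h = l j\<close>
    by auto
  ultimately show ?thesis
    using h PS_mult_neg_iff_add_eq_0[OF m m' h] unfolding free_block_def by simp
qed

lemma mu'_star_on_interval_block:
  assumes block: "free_block n l m m' k = {p..r}" and j: "j \<in> {p..r}"
  shows "mu'_star n l m m' j = (if j < p + card {i\<in>{p..r}. m' i = 1/2} then 1/2 else -1/2)"
proof -
  have "j \<in> free_block n l m m' k"
    using block j by simp
  then have "j \<in> {1..n}" "m j * m' j < 0" and block_j: "free_block n l m m' j = {p..r}"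
    using free_block_eq_of_mem block unfolding free_block_def by auto
  then have "mu'_star n l m m' j =
      (if card {i\<in>{p..r}. i < j} < card {i\<in>{p..r}. m' i = 1/2} then 1/2 else -1/2)"
    by (simp only: mu'_star_free block_j)
  moreover have "{i\<in>{p..r}. i < j} = {p..<j}"
    using j by auto
  ultimately show ?thesis
    using j by (simp add: less_diff_conv2)
qed

lemma mu'_star_antimono_step:
  assumes m: "m \<in> PS n" and m': "m' \<in> PS n"
    and lm: "l + m \<in> Pplus n" and lmm: "l + m + m' \<in> Pplus n"
    and j: "1 \<le> j" "j < n" and level: "l (j + 1) = l j"
  shows "mu'_star n l m m' (j + 1) \<le> mu'_star n l m m' j"
proof -
  have jn: "j \<in> {1..n}" "j + 1 \<in> {1..n}"
    using j by auto
  have m_dec: "m (j + 1) \<le> m j"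
    using lm j level unfolding Pplus_def by fastforce
  have mm'_dec: "m (j + 1) + m' (j + 1) \<le> m j + m' j"
    using lmm j level unfolding Pplus_def by fastforce
  have S_half: "mu'_star n l m m' i = 1/2 \<or> mu'_star n l m m' i = -1/2" if "i \<in> {1..n}" for i
    using PS_D[OF mu'_star_PS[OF m'] that] .
  show ?thesis
  proof (cases "m j * m' j < 0"; cases "m (j + 1) * m' (j + 1) < 0")
    assume free: "m j * m' j < 0" "m (j + 1) * m' (j + 1) < 0"
    then have same_block: "free_block n l m m' (j + 1) = free_block n l m m' j"
      using jn level by (intro free_block_eq_of_mem) (simp add: free_block_def)
    have "card {i\<in>free_block n l m m' j. i < j} \<le> card {i\<in>free_block n l m m' j. i < j + 1}"
      by (rule card_mono) (auto simp: free_block_def)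
    then show ?thesis
      using mu'_star_free[of j n m m' l, OF jn(1) free(1)]
        mu'_star_free[of "j + 1" n m m' l, OF jn(2) free(2)]
      unfolding same_block by auto
  next
    assume "m j * m' j < 0" "\<not> m (j + 1) * m' (j + 1) < 0"
    then have "m' (j + 1) \<le> 0"
      using PS_mult_neg_iff_add_eq_0[OF m m' jn(1)] PS_eq_if_not_mult_neg[OF m m' jn(2)] mm'_dec
      by simp
    then have "mu'_star n l m m' (j + 1) = -1/2"
      using \<open>\<not> m (j + 1) * m' (j + 1) < 0\<close> PS_D[OF m' jn(2)] by (auto simp: mu'_star_not_free)
    then show ?thesis
      using S_half[OF jn(1)] by auto
  next
    assume "\<not> m j * m' j < 0" "m (j + 1) * m' (j + 1) < 0"
    then have "0 \<le> m' j"
      using PS_mult_neg_iff_add_eq_0[OF m m' jn(2)] PS_eq_if_not_mult_neg[OF m m' jn(1)] mm'_dec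
      by simp
    then have "mu'_star n l m m' j = 1/2"
      using \<open>\<not> m j * m' j < 0\<close> PS_D[OF m' jn(1)] by (auto simp: mu'_star_not_free)
    then show ?thesis
      using S_half[OF jn(2)] by auto
  next
    assume "\<not> m j * m' j < 0" "\<not> m (j + 1) * m' (j + 1) < 0"
    then show ?thesis
      using PS_eq_if_not_mult_neg[OF m m' jn(1)] PS_eq_if_not_mult_neg[OF m m' jn(2)] m_dec
      by (simp add: mu'_star_not_free)
  qed
qed

locale type1_triplet =
  fixes n :: nat and l m m' :: "nat \<Rightarrow> real"
  assumes two_le_n: "2 \<le> n"
    and admissible: "admissible n l m m'"
    and type1: "type1 n l m m'"
begin

lemma PS_m: "m \<in> PS n" and PS_m': "m' \<in> PS n"
  and lm_Pplus: "l + m \<in> Pplus n" and lmm_Pplus: "l + m + m' \<in> Pplus n"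
  using admissible unfolding admissible_def by auto

lemma l_Pplus: "l \<in> Pplus n"
  using admissible Delta_subset_Pplus unfolding admissible_def by blast

lemma last_indices: "n - 1 \<in> {1..n}" "n \<in> {1..n}"
  using two_le_n by auto

lemma mu'_star_half: "i \<in> {1..n} \<Longrightarrow> mu'_star n l m m' i = 1/2 \<or> mu'_star n l m m' i = -1/2"
  using PS_D[OF mu'_star_PS[OF PS_m']] .

lemma last_two_free: "m (n - 1) * m' (n - 1) < 0" "m n * m' n < 0"
  using type1 unfolding type1_def free_interval_def free_cand_def by blast+

lemma last_level_drop: "l n < l (n - 1)"
proof -
  obtain F G where "free_interval n l m m' F" "free_interval n l m m' G" "F \<noteq> G"
    "n - 1 \<in> F" "n \<in> G"
    using type1 unfolding type1_def by blast
  then have "free_block n l m m' (n - 1) \<noteq> free_block n l m m' n"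
    using free_interval_eq_free_block by metis
  then have "l (n - 1) \<noteq> l n"
    unfolding free_block_def by auto
  moreover have "l n \<le> l (n - 1)"
    using Pplus_antimono[OF l_Pplus, of "n - 1" n] two_le_n by simp
  ultimately show ?thesis
    by simp
qed

lemma last_levels_cancel: "l (n - 1) + l n = 0"
  and mu'_star_second_last: "mu'_star n l m m' (n - 1) = -1/2"
proof -
  have "2 * l n \<in> \<int>" "l (n - 1) - l n \<in> \<int>"
    using l_Pplus last_indices unfolding Pplus_def by auto
  moreover have "l (n - 1) + l n = 2 * l n + (l (n - 1) - l n)"
    by simp
  ultimately have ints: "l (n - 1) + l n \<in> \<int>"
    by (metis Ints_add)
  have nonneg: "0 \<le> l (n - 1) + l n"
    using l_Pplus unfolding Pplus_def by simp
  have neg: "l (n - 1) + l n + mu'_star n l m m' (n - 1) + mu'_star n l m m' n < 0"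
    using type1 unfolding type1_def by blast
  note halves = mu'_star_half[OF last_indices(1)] mu'_star_half[OF last_indices(2)]
  then have "\<bar>l (n - 1) + l n\<bar> < 1"
    using neg nonneg by auto
  then show cancel: "l (n - 1) + l n = 0"
    using Ints_nonzero_abs_less1 ints by blast
  show "mu'_star n l m m' (n - 1) = -1/2"
    using neg halves cancel by auto
qed

lemma last_block_interval:
  obtains p where "free_block n l m m' (n - 1) = {p..n - 1}"
proof -
  let ?B = "free_block n l m m' (n - 1)"
  have "?B \<subseteq> {1..n - 1}"
  proof
    fix i assume "i \<in> ?B"
    then have "i \<in> {1..n}" "i \<noteq> n"
      using last_level_drop unfolding free_block_def by auto
    then show "i \<in> {1..n - 1}"
      by auto
  qed
  moreover have last: "n - 1 \<in> ?B"
    using last_indices last_two_free unfolding free_block_def by simp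
  moreover have "finite ?B"
    unfolding free_block_def by simp
  moreover have "Min ?B \<in> ?B"
    using Min_in \<open>finite ?B\<close> last by blast
  ultimately have "?B \<subseteq> {Min ?B..n - 1}"
    by auto
  moreover have "{Min ?B..n - 1} \<subseteq> ?B"
    using free_block_convex[OF l_Pplus lmm_Pplus PS_m PS_m' \<open>Min ?B \<in> ?B\<close> last] by auto
  ultimately show ?thesis
    using that by blast
qed

lemma raised_position_eq:
  assumes block: "free_block n l m m' (n - 1) = {p..n - 1}"
  shows "n - a_num n l m m' = p + card {i\<in>{p..n - 1}. m' i = 1/2}"
    and "p + card {i\<in>{p..n - 1}. m' i = 1/2} \<le> n - 1"
proof -
  let ?a = "card {i\<in>{p..n - 1}. m' i = -1/2}" and ?b = "card {i\<in>{p..n - 1}. m' i = 1/2}"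
  have a_num: "a_num n l m m' = ?a"
    unfolding a_num_def fr_of_eq_free_block[of "n - 1" n m m' l, OF last_indices(1) last_two_free(1)] block ..
  have "n - 1 \<in> {p..n - 1}" "{p..n - 1} \<subseteq> {1..n}"
    using last_indices last_two_free block[symmetric] unfolding free_block_def by auto
  then have split: "{p..n - 1} = {i\<in>{p..n - 1}. m' i = -1/2} \<union> {i\<in>{p..n - 1}. m' i = 1/2}"
    using PS_D[OF PS_m'] by blast
  have "?a + ?b = card ({i\<in>{p..n - 1}. m' i = -1/2} \<union> {i\<in>{p..n - 1}. m' i = 1/2})"
    by (rule card_Un_disjoint[symmetric]) auto
  also have "\<dots> = card {p..n - 1}"
    by (rule arg_cong[where f = card, OF split[symmetric]])
  also have "\<dots> = n - p"
    using two_le_n by simp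
  finally have "?a + ?b = n - p" .
  moreover show "p + ?b \<le> n - 1"
    using mu'_star_on_interval_block[OF block \<open>n - 1 \<in> {p..n - 1}\<close>] mu'_star_second_last
    by (auto split: if_splits)
  ultimately show "n - a_num n l m m' = p + ?b"
    unfolding a_num by simp
qed

lemma raised_position_in_block: "n - a_num n l m m' \<in> free_block n l m m' (n - 1)"
proof -
  obtain p where block: "free_block n l m m' (n - 1) = {p..n - 1}"
    using last_block_interval by blast
  have "n - a_num n l m m' \<in> {p..n - 1}"
    using raised_position_eq[OF block] by simp
  then show ?thesis
    unfolding block .
qed

lemma mu'_star_before_raised_position:
  assumes j: "1 \<le> j" "j + 1 = n - a_num n l m m'" and level: "l (j + 1) = l j"
  shows "mu'_star n l m m' j = 1/2"
proof -
  obtain p where block: "free_block n l m m' (n - 1) = {p..n - 1}"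
    using last_block_interval by blast
  let ?b = "card {i\<in>{p..n - 1}. m' i = 1/2}"
  have q: "j + 1 = p + ?b" "p + ?b \<le> n - 1"
    using raised_position_eq[OF block] j by simp_all
  show ?thesis
  proof (cases "p \<le> j")
    case True
    then have "j \<in> {p..n - 1}"
      using q by simp
    then show ?thesis
      using mu'_star_on_interval_block[OF block \<open>j \<in> {p..n - 1}\<close>] q by simp
  next
    case False
    \<comment> \<open>then b = 0 and j sits just left of the block, so j is not free, and dominance
      of l + m + m' at j forces m' j = 1/2\<close>
    then have p: "p = j + 1"
      using q by linarith
    have jn: "j \<in> {1..n}" "j + 1 \<le> n - 1"
      using j q by auto
    have "j + 1 \<in> free_block n l m m' (n - 1)" "j \<notin> free_block n l m m' (n - 1)"
      using block p jn by auto
    then have next_free: "m (j + 1) + m' (j + 1) = 0" and "\<not> m j * m' j < 0"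
      using PS_mult_neg_iff_add_eq_0[OF PS_m PS_m'] jn level unfolding free_block_def by auto
    then have "m j = m' j" and S_j: "mu'_star n l m m' j = m' j"
      using PS_eq_if_not_mult_neg[OF PS_m PS_m' jn(1)] mu'_star_not_free by blast+
    moreover have "l (j + 1) + m (j + 1) + m' (j + 1) \<le> l j + m j + m' j"
      using lmm_Pplus jn unfolding Pplus_def by auto
    ultimately have "0 \<le> m' j"
      using next_free level by simp
    then show ?thesis
      using S_j PS_D[OF PS_m' jn(1)] by auto
  qed
qed

lemma raised_position_free:
  "n - a_num n l m m' \<in> {1..n}" "n - a_num n l m m' \<noteq> n"
  "m (n - a_num n l m m') + m' (n - a_num n l m m') = 0"
  using raised_position_in_block last_level_drop PS_mult_neg_iff_add_eq_0[OF PS_m PS_m']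
  unfolding free_block_def by auto

lemma mu'_diamond_PS: "mu'_diamond n l m m' \<in> PS n"
  unfolding mu'_diamond_def
  by (intro PS_update mu'_star_PS PS_m' last_indices raised_position_free) simp_all

lemma mu_diamond_PS: "mu_diamond n l m m' \<in> PS n"
  unfolding mu_diamond_def
  by (intro PS_update mu_star_PS PS_m PS_m' last_indices raised_position_free) simp_all

lemma mu'_diamond_add_mu_diamond: "mu'_diamond n l m m' j + mu_diamond n l m m' j = m j + m' j"
proof (cases "j = n \<or> j = n - a_num n l m m'")
  case True
  moreover have "m n + m' n = 0"
    using PS_mult_neg_iff_add_eq_0[OF PS_m PS_m' last_indices(2)] last_two_free(2) by simp
  ultimately show ?thesis
    using raised_position_free(3) unfolding mu'_diamond_def mu_diamond_def by auto
next
  case False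
  then show ?thesis
    using mu_star_add_mu'_star[OF PS_m PS_m', of l j]
    unfolding mu'_diamond_def mu_diamond_def by simp
qed

lemma mu'_diamond_antimono_step:
  assumes j: "1 \<le> j" "j < n" and level: "l (j + 1) = l j"
  shows "mu'_diamond n l m m' (j + 1) \<le> mu'_diamond n l m m' j"
proof -
  have "j + 1 \<noteq> n"
    using last_level_drop level by auto
  have star_le_diamond: "mu'_star n l m m' i \<le> mu'_diamond n l m m' i" if "i \<in> {1..n}" for i
    using mu'_star_half[OF that] unfolding mu'_diamond_def by auto
  show ?thesis
  proof (cases "j + 1 = n - a_num n l m m'")
    case True
    then have "mu'_diamond n l m m' j = mu'_star n l m m' j"
      using j unfolding mu'_diamond_def by simp
    then show ?thesis
      using mu'_star_before_raised_position[OF j(1) True level] True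
      unfolding mu'_diamond_def by simp
  next
    case False
    then have "mu'_diamond n l m m' (j + 1) = mu'_star n l m m' (j + 1)"
      using \<open>j + 1 \<noteq> n\<close> unfolding mu'_diamond_def by simp
    also have "\<dots> \<le> mu'_star n l m m' j"
      using mu'_star_antimono_step[OF PS_m PS_m' lm_Pplus lmm_Pplus j level] .
    also have "\<dots> \<le> mu'_diamond n l m m' j"
      using star_le_diamond j by simp
    finally show ?thesis .
  qed
qed

lemma l_add_mu'_diamond_Pplus: "l + mu'_diamond n l m m' \<in> Pplus n"
proof (rule Pplus_add_PS[OF l_Pplus mu'_diamond_PS])
  show "mu'_diamond n l m m' (j + 1) \<le> mu'_diamond n l m m' j"
    if "1 \<le> j" "j < n" "l (j + 1) = l j" for j
    using mu'_diamond_antimono_step that .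
  have "mu'_diamond n l m m' n = 1/2"
    using raised_position_free(2) unfolding mu'_diamond_def by simp
  then show "0 \<le> l (n - 1) + l n + mu'_diamond n l m m' (n - 1) + mu'_diamond n l m m' n"
    using last_levels_cancel PS_D[OF mu'_diamond_PS last_indices(1)] by auto
qed

lemma admissible_diamond: "admissible n l (mu'_diamond n l m m') (mu_diamond n l m m')"
proof -
  have sum: "l + mu'_diamond n l m m' + mu_diamond n l m m' = l + m + m'"
    using mu'_diamond_add_mu_diamond by (simp add: fun_eq_iff algebra_simps)
  show ?thesis
    using admissible mu'_diamond_PS mu_diamond_PS l_add_mu'_diamond_Pplus
    unfolding admissible_def sum by blast
qed

end

theorem proposition6p5:
  fixes n :: nat and l m m' :: "nat \<Rightarrow> real"
  assumes "n \<ge> 2"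
    and "admissible n l m m'"
    and "type1 n l m m'"
  shows "l + mu'_diamond n l m m' \<in> Pplus n
     \<and> admissible n l (mu'_diamond n l m m') (mu_diamond n l m m')"
proof -
  interpret type1_triplet n l m m'
    using assms by unfold_locales
  show ?thesis
    using l_add_mu'_diamond_Pplus admissible_diamond by blast
qed

end
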